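(* Let $k\ge\ell\ge1$ be integers. Then $\sup_G s_{k,\ell}(G)\ge \mathrm{OPT}(k,\ell)$, where the supremum is over all finite digraphs $G$.
   Context: Put $m=k+\ell$; use the convention $0^0=1$. Digraphs are finite, without loops; $xy$ denotes an arc from $x$ to $y$. The oriented star $S_{k,\ell}$ has a center $c$, a set $O$ of $k$ out-leaves and a set $I$ of $\ell$ in-leaves; its arcs are exactly $co$ ($o\in O$) and $ic$ ($i\in I$). For a digraph $G$ on $n$ vertices, let $\phi$ be a uniformly random map from $V(S_{k,\ell})$ to $V(G)$ (all $n^{m+1}$ maps equally likely), and let $\mathcal S$ be the set of maps $\phi$ that are isomorphisms from $S_{k,\ell}$ onto the induced subdigraph $G[\mathrm{Im}\,\phi]$ (in particular injective). Set $s_{k,\ell}(G)=\Pr[\phi\in\mathcal S]$. Define $\mathrm{OPT}(k,\ell)=2^{-2k}\max_{\alpha\in[0,1]}\{\alpha(1-\alpha)^{2k}+(1-\alpha)\alpha^{2k}\}$ if $k=\ell$, and, if $k>\ell$, $\mathrm{OPT}(k,\ell)=\max_{(\alpha,d)\in[0,\frac12]\times[0,\frac{k}{k+\ell}]}\{\alpha(1-\alpha)^{m}d^k(1-d)^\ell+\frac{(k-1)^{k-1}\ell^\ell}{(m-1)^{m-1}}(1-\alpha)\alpha^{m}(1-d)\}$. *)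

theory Defs
  imports "HOL-Analysis.Analysis"
begin

text \<open>A finite digraph: a finite nonempty vertex set V (vertices are naturals, which is
  no loss of generality up to isomorphism) and an arc set E \<subseteq> V \<times> V without loops.\<close>
definition digraph :: "nat set \<Rightarrow> (nat \<times> nat) set \<Rightarrow> bool" where
  "digraph V E \<longleftrightarrow> finite V \<and> V \<noteq> {} \<and> E \<subseteq> V \<times> V \<and> (\<forall>x. (x, x) \<notin> E)"

definition star_arc :: "nat \<Rightarrow> nat \<Rightarrow> nat \<Rightarrow> nat \<Rightarrow> bool" where
  "star_arc k l a b \<longleftrightarrow> (a = 0 \<and> b \<in> {1..k}) \<or> (a \<in> {k+1..k+l} \<and> b = 0)"

definition star_copies :: "nat \<Rightarrow> nat \<Rightarrow> nat set \<Rightarrow> (nat \<times> nat) set \<Rightarrow> (nat \<Rightarrow> nat) set" where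
  "star_copies k l V E = {\<phi> \<in> {0..k+l} \<rightarrow>\<^sub>E V. inj_on \<phi> {0..k+l} \<and>
     (\<forall>a\<in>{0..k+l}. \<forall>b\<in>{0..k+l}. ((\<phi> a, \<phi> b) \<in> E \<longleftrightarrow> star_arc k l a b))}"

definition s_density :: "nat \<Rightarrow> nat \<Rightarrow> nat set \<Rightarrow> (nat \<times> nat) set \<Rightarrow> real" where
  "s_density k l V E = real (card (star_copies k l V E)) / real (card V) ^ (k + l + 1)"

definition OPT :: "nat \<Rightarrow> nat \<Rightarrow> real" where
  "OPT k l = (if k = l then
      (1 / 2 ^ (2 * k)) * (SUP \<alpha>\<in>{0..1::real}. \<alpha> * (1 - \<alpha>) ^ (2 * k) + (1 - \<alpha>) * \<alpha> ^ (2 * k))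
    else
      (SUP p \<in> {0..1/2::real} \<times> {0..real k / real (k + l)}.
         (case p of (\<alpha>, d) \<Rightarrow>
           \<alpha> * (1 - \<alpha>) ^ (k + l) * d ^ k * (1 - d) ^ l
           + (real (k - 1) ^ (k - 1) * real l ^ l / real (k + l - 1) ^ (k + l - 1))
             * (1 - \<alpha>) * \<alpha> ^ (k + l) * (1 - d))))"

end

theory Submission
  imports Defs
begin

text \<open>
  A pattern is a digraph H on classes 0, ..., K-1 in which every class c comes with a set Out c
  of out-neighbour classes and a set In c of in-neighbour classes, no two classes of
  Out c \<union> In c being adjacent. In the blow-up replacing class c by s c vertices (arcs between
  classes as in H, none inside a class), every injective map sending the centre of S_{k,l} to
  class c, its out-leaves to classes in Out c and its in-leaves to classes in In c is an induced
  copy. Letting s c grow like w c * n, the density of such copies tends to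
  \<Sum>c. w c (\<Sum>x\<in>Out c. w x)^k (\<Sum>x\<in>In c. w x)^l, a lower bound for the supremum.

  For k = l the directed 4-cycle with weights \<alpha>/2, \<alpha>/2, (1-\<alpha>)/2, (1-\<alpha>)/2 gives the bound.
  For k > l a circulant bipartite pattern between two sets of N = k+l-1 classes, plus a sink,
  realises the objective of OPT for every d \<ge> 1 - x, where x = (k-1)/(k+l-1); for d < x the
  objective is at most its value at d = x, because y^(k-1) (1-y)^l is maximal at y = x (AM-GM).
\<close>

abbreviation sup_s_density :: "nat \<Rightarrow> nat \<Rightarrow> real" where
  "sup_s_density k l \<equiv> SUP G \<in> {(V, E). digraph V E}. s_density k l (fst G) (snd G)"

lemma prod_lessThan_add_if:
  fixes a b :: "'a::comm_monoid_mult"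
  shows "(\<Prod>i<k + l. if i < k then a else b) = a ^ k * b ^ l"
  by (induction l) (simp_all add: ac_simps)

lemma sum_lessThan_add_if:
  fixes u v :: "'a::comm_semiring_1"
  shows "(\<Sum>i<a + b. if i < a then u else v) = of_nat a * u + of_nat b * v"
  by (induction b) (simp_all add: algebra_simps)

lemma sum_lessThan_add:
  fixes f :: "nat \<Rightarrow> 'a::comm_monoid_add"
  shows "(\<Sum>c<a + b. f c) = (\<Sum>c<a. f c) + (\<Sum>j<b. f (a + j))"
  by (induction b) (simp_all add: ac_simps)

lemma card_inj_PiE_Suc_ge:
  assumes "\<And>i. i \<le> n \<Longrightarrow> finite (S i)"
  shows "card {\<phi> \<in> PiE {..<n} S. inj_on \<phi> {..<n}} * (card (S n) - n)
    \<le> card {\<phi> \<in> PiE {..<Suc n} S. inj_on \<phi> {..<Suc n}}"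
proof -
  define T where "T = {\<phi> \<in> PiE {..<n} S. inj_on \<phi> {..<n}}"
  define T' where "T' = {\<phi> \<in> PiE {..<Suc n} S. inj_on \<phi> {..<Suc n}}"
  define extend :: "(nat \<Rightarrow> 'a) \<times> 'a \<Rightarrow> (nat \<Rightarrow> 'a)" where "extend = (\<lambda>(\<psi>, x). \<psi>(n := x))"
  have finT: "finite T" unfolding T_def
    using assms by (intro finite_subset[OF _ finite_PiE[of "{..<n}" S]]) auto
  have finT': "finite T'" unfolding T'_def
    using assms by (intro finite_subset[OF _ finite_PiE[of "{..<Suc n}" S]]) auto
  have inj: "inj_on extend (SIGMA \<psi>:T. S n - \<psi> ` {..<n})"
  proof (rule inj_onI, clarsimp simp: extend_def)
    fix \<psi> x \<psi>' x'
    assume "\<psi> \<in> T" "\<psi>' \<in> T" "\<psi>(n := x) = \<psi>'(n := x')"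
    moreover have "\<psi> n = \<psi>' n"
      using \<open>\<psi> \<in> T\<close> \<open>\<psi>' \<in> T\<close> unfolding T_def by (auto simp: PiE_def extensional_def)
    ultimately show "\<psi> = \<psi>' \<and> x = x'" by (metis fun_upd_same fun_upd_upd fun_upd_triv)
  qed
  have extend_into: "extend ` (SIGMA \<psi>:T. S n - \<psi> ` {..<n}) \<subseteq> T'"
  proof (clarsimp simp: extend_def T'_def T_def)
    fix \<psi> x
    assume "\<psi> \<in> PiE {..<n} S" "inj_on \<psi> {..<n}" "x \<in> S n" "x \<notin> \<psi> ` {..<n}"
    then show "\<psi>(n := x) \<in> PiE {..<Suc n} S \<and> inj_on (\<psi>(n := x)) {..<Suc n}"
      by (auto simp: lessThan_Suc PiE_def extensional_def Pi_def inj_on_def)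
  qed
  have "card T * (card (S n) - n) = (\<Sum>\<psi>\<in>T. card (S n) - n)" by simp
  also have "\<dots> \<le> (\<Sum>\<psi>\<in>T. card (S n - \<psi> ` {..<n}))"
  proof (rule sum_mono)
    fix \<psi>
    have "card (S n) - card (\<psi> ` {..<n}) \<le> card (S n - \<psi> ` {..<n})"
      by (rule diff_card_le_card_Diff) auto
    then show "card (S n) - n \<le> card (S n - \<psi> ` {..<n})"
      using card_image_le[of "{..<n}" \<psi>] by simp
  qed
  also have "\<dots> = card (SIGMA \<psi>:T. S n - \<psi> ` {..<n})"
    using finT assms by (intro card_SigmaI[symmetric]) auto
  also have "\<dots> \<le> card T'"
    using card_inj_on_le[OF inj extend_into finT'] .
  finally show ?thesis unfolding T_def T'_def .
qed

lemma card_inj_PiE_lessThan_ge: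
  assumes "\<And>i. i < n \<Longrightarrow> finite (S i)"
  shows "(\<Prod>i<n. card (S i) - n) \<le> card {\<phi> \<in> PiE {..<n} S. inj_on \<phi> {..<n}}"
  using assms
proof (induction n)
  case 0
  then show ?case by simp
next
  case (Suc n)
  have "(\<Prod>i<Suc n. card (S i) - Suc n) \<le> (\<Prod>i<n. card (S i) - n) * (card (S n) - n)"
    by (simp, intro mult_mono prod_mono) auto
  also have "\<dots> \<le> card {\<phi> \<in> PiE {..<n} S. inj_on \<phi> {..<n}} * (card (S n) - n)"
    using Suc by simp
  also have "\<dots> \<le> card {\<phi> \<in> PiE {..<Suc n} S. inj_on \<phi> {..<Suc n}}"
    using Suc.prems by (intro card_inj_PiE_Suc_ge) simp
  finally show ?case .
qed

lemma finite_star_copies: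
  assumes "finite V"
  shows "finite (star_copies k l V E)"
  unfolding star_copies_def
  using assms by (intro finite_subset[OF _ finite_PiE[of "{0..k+l}" "\<lambda>_. V"]]) auto

lemma s_density_le_1:
  assumes "digraph V E"
  shows "s_density k l V E \<le> 1"
proof -
  have fin: "finite V" and ne: "V \<noteq> {}" using assms unfolding digraph_def by auto
  have "star_copies k l V E \<subseteq> PiE {0..k+l} (\<lambda>_. V)" unfolding star_copies_def by auto
  then have "card (star_copies k l V E) \<le> card (PiE {0..k+l} (\<lambda>_. V))"
    using fin by (intro card_mono) (auto intro: finite_PiE)
  also have "\<dots> = card V ^ (k + l + 1)" by (simp add: card_PiE)
  finally have "real (card (star_copies k l V E)) \<le> real (card V) ^ (k + l + 1)"
    by (metis of_nat_le_iff of_nat_power)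
  moreover have "real (card V) ^ (k + l + 1) > 0" using fin ne by (simp add: card_gt_0_iff)
  ultimately show ?thesis unfolding s_density_def by simp
qed

lemma s_density_le_sup:
  assumes "digraph V E"
  shows "s_density k l V E \<le> sup_s_density k l"
proof -
  have "bdd_above ((\<lambda>G. s_density k l (fst G) (snd G)) ` {(V, E). digraph V E})"
    by (rule bdd_aboveI[of _ 1]) (auto intro: s_density_le_1)
  from cSUP_upper[OF _ this, of "(V, E)"] show ?thesis using assms by simp
qed

lemma tendsto_nat_diff_over_n:
  fixes a :: "nat \<Rightarrow> nat"
  assumes "(\<lambda>n. real (a n) / real n) \<longlonglongrightarrow> L" and "L \<ge> 0"
  shows "(\<lambda>n. real (a n - M) / real n) \<longlonglongrightarrow> L"
proof -
  have "(\<lambda>n. max 0 (real (a n) / real n - real M / real n)) \<longlonglongrightarrow> max 0 (L - 0)"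
    by (intro tendsto_intros assms)
  then have lim: "(\<lambda>n. max 0 (real (a n) / real n - real M / real n)) \<longlonglongrightarrow> L"
    using assms(2) by simp
  have "eventually (\<lambda>n. max 0 (real (a n) / real n - real M / real n) = real (a n - M) / real n) sequentially"
    using eventually_gt_at_top[of 0]
  proof eventually_elim
    case (elim n)
    then show ?case
      by (cases "M \<le> a n") (auto simp: of_nat_diff diff_divide_distrib divide_right_mono)
  qed
  from Lim_transform_eventually[OF lim this] show ?thesis .
qed

definition blowup_size :: "(nat \<Rightarrow> real) \<Rightarrow> nat \<Rightarrow> nat \<Rightarrow> nat" where
  "blowup_size w n c = nat \<lfloor>w c * real n\<rfloor> + 1"

lemma tendsto_blowup_size:
  assumes "w c \<ge> 0"
  shows "(\<lambda>n. real (blowup_size w n c) / real n) \<longlonglongrightarrow> w c"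
proof (rule tendsto_sandwich[of "\<lambda>n. w c" _ _ "\<lambda>n. w c + 1 / real n"])
  show "eventually (\<lambda>n. w c \<le> real (blowup_size w n c) / real n) sequentially"
    using eventually_gt_at_top[of 0]
  proof eventually_elim
    case (elim n)
    have "w c * real n \<le> real (blowup_size w n c)"
      using assms by (simp add: blowup_size_def of_nat_nat) linarith
    then show ?case using elim by (simp add: field_simps)
  qed
  show "eventually (\<lambda>n. real (blowup_size w n c) / real n \<le> w c + 1 / real n) sequentially"
    using eventually_gt_at_top[of 0]
  proof eventually_elim
    case (elim n)
    have "real (blowup_size w n c) \<le> w c * real n + 1"
      using assms by (simp add: blowup_size_def of_nat_nat)
    then show ?case using elim by (simp add: field_simps)
  qed
  show "(\<lambda>n. w c + 1 / real n) \<longlonglongrightarrow> w c"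
    using tendsto_add[OF tendsto_const lim_const_over_n[of 1]] by simp
qed simp

lemma tendsto_sum_blowup_size:
  assumes "\<And>c. c \<in> X \<Longrightarrow> w c \<ge> 0"
  shows "(\<lambda>n. real (\<Sum>c\<in>X. blowup_size w n c) / real n) \<longlonglongrightarrow> (\<Sum>c\<in>X. w c)"
proof -
  have "(\<lambda>n. \<Sum>c\<in>X. real (blowup_size w n c) / real n) \<longlonglongrightarrow> (\<Sum>c\<in>X. w c)"
    using assms by (intro tendsto_sum tendsto_blowup_size)
  then show ?thesis by (simp add: sum_divide_distrib)
qed

lemma star_count_ratio_scale:
  fixes r D :: real and a b d :: "nat \<Rightarrow> real"
  assumes "r > 0"
  shows "(\<Sum>c\<in>A. (a c / r) * (b c / r) ^ k * (d c / r) ^ l) / (D / r) ^ (k+l+1)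
       = (\<Sum>c\<in>A. a c * b c ^ k * d c ^ l) / D ^ (k+l+1)"
proof -
  have "(\<Sum>c\<in>A. (a c / r) * (b c / r) ^ k * (d c / r) ^ l)
      = (\<Sum>c\<in>A. a c * b c ^ k * d c ^ l) / r ^ (k+l+1)"
    using assms by (simp add: sum_divide_distrib power_divide power_add field_simps)
  then show ?thesis using assms by (simp add: power_divide)
qed

definition blowup_class :: "nat \<Rightarrow> (nat \<Rightarrow> nat) \<Rightarrow> nat \<Rightarrow> nat set" where
  "blowup_class K s c = (\<lambda>j. K * j + c) ` {..<s c}"

lemma mod_blowup_class: "c < K \<Longrightarrow> v \<in> blowup_class K s c \<Longrightarrow> v mod K = c"
  by (auto simp: blowup_class_def)

lemma finite_blowup_class: "finite (blowup_class K s c)"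
  by (simp add: blowup_class_def)

lemma card_blowup_class:
  assumes "c < K"
  shows "card (blowup_class K s c) = s c"
proof -
  have "inj_on (\<lambda>j. K * j + c) {..<s c}" using assms by (auto simp: inj_on_def)
  then show ?thesis by (simp add: blowup_class_def card_image)
qed

lemma card_UN_blowup_class:
  assumes "X \<subseteq> {..<K}"
  shows "card (\<Union>c\<in>X. blowup_class K s c) = (\<Sum>c\<in>X. s c)"
proof -
  have "finite X" using assms finite_subset by blast
  moreover have "blowup_class K s c \<inter> blowup_class K s c' = {}"
    if "c \<in> X" "c' \<in> X" "c \<noteq> c'" for c c'
    using that assms mod_blowup_class[of c K] mod_blowup_class[of c' K] by blast
  ultimately have "card (\<Union>c\<in>X. blowup_class K s c) = (\<Sum>c\<in>X. card (blowup_class K s c))"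
    by (intro card_UN_disjoint) (auto simp: finite_blowup_class)
  also have "\<dots> = (\<Sum>c\<in>X. s c)"
    using assms by (intro sum.cong) (auto simp: card_blowup_class)
  finally show ?thesis .
qed

locale star_pattern =
  fixes K :: nat and H :: "nat \<Rightarrow> nat \<Rightarrow> bool" and Out In :: "nat \<Rightarrow> nat set"
  assumes asym: "H a b \<Longrightarrow> \<not> H b a"
    and Out_subset: "c < K \<Longrightarrow> Out c \<subseteq> {..<K}"
    and In_subset: "c < K \<Longrightarrow> In c \<subseteq> {..<K}"
    and arc_to_Out: "c < K \<Longrightarrow> x \<in> Out c \<Longrightarrow> H c x"
    and arc_from_In: "c < K \<Longrightarrow> i \<in> In c \<Longrightarrow> H i c"
    and no_arc_between_leaves: "c < K \<Longrightarrow> x \<in> Out c \<union> In c \<Longrightarrow> y \<in> Out c \<union> In c \<Longrightarrow> \<not> H x y"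
begin

definition blowup_vertices :: "(nat \<Rightarrow> nat) \<Rightarrow> nat set" where
  "blowup_vertices s = (\<Union>c<K. blowup_class K s c)"

definition blowup_arcs :: "(nat \<Rightarrow> nat) \<Rightarrow> (nat \<times> nat) set" where
  "blowup_arcs s = {(u, v). u \<in> blowup_vertices s \<and> v \<in> blowup_vertices s \<and> H (u mod K) (v mod K)}"

lemma finite_blowup_vertices: "finite (blowup_vertices s)"
  by (simp add: blowup_vertices_def finite_blowup_class)

lemma card_blowup_vertices: "card (blowup_vertices s) = (\<Sum>c<K. s c)"
  unfolding blowup_vertices_def by (rule card_UN_blowup_class) simp

lemma digraph_blowup:
  assumes "c < K" and "0 < s c"
  shows "digraph (blowup_vertices s) (blowup_arcs s)"
proof -
  have "blowup_class K s c \<noteq> {}" using assms card_blowup_class[of c K s] by force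
  then have "blowup_vertices s \<noteq> {}" using assms(1) unfolding blowup_vertices_def by blast
  moreover have "\<not> H a a" for a using asym by blast
  ultimately show ?thesis
    unfolding digraph_def blowup_arcs_def using finite_blowup_vertices by auto
qed

definition leaf_classes :: "nat \<Rightarrow> nat \<Rightarrow> nat \<Rightarrow> nat set" where
  "leaf_classes k c a = (if a = 0 then {c} else if a \<le> k then Out c else In c)"

lemma leaf_classes_subset: "c < K \<Longrightarrow> leaf_classes k c a \<subseteq> {..<K}"
  using Out_subset In_subset by (simp add: leaf_classes_def)

lemma finite_leaf_classes: "c < K \<Longrightarrow> finite (leaf_classes k c a)"
  by (rule finite_subset[OF leaf_classes_subset]) simp_all

lemma arc_iff_star_arc:
  assumes "c < K" and "a \<le> k + l" "b \<le> k + l"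
    and "x \<in> leaf_classes k c a" "y \<in> leaf_classes k c b"
  shows "H x y \<longleftrightarrow> star_arc k l a b"
  using assms asym arc_to_Out[OF assms(1)] arc_from_In[OF assms(1)] no_arc_between_leaves[OF assms(1)]
  by (auto simp: leaf_classes_def star_arc_def split: if_splits)

definition centred_copies :: "nat \<Rightarrow> nat \<Rightarrow> (nat \<Rightarrow> nat) \<Rightarrow> nat \<Rightarrow> (nat \<Rightarrow> nat) set" where
  "centred_copies k l s c = {\<phi> \<in> PiE {..<k+l+1} (\<lambda>a. \<Union>x\<in>leaf_classes k c a. blowup_class K s x).
     inj_on \<phi> {..<k+l+1}}"

lemma centred_copies_subset:
  assumes "c < K"
  shows "centred_copies k l s c \<subseteq> star_copies k l (blowup_vertices s) (blowup_arcs s)"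
proof
  fix \<phi> assume "\<phi> \<in> centred_copies k l s c"
  moreover have range: "{..<k+l+1} = {0..k+l}" by auto
  ultimately have \<phi>: "\<phi> \<in> PiE {0..k+l} (\<lambda>a. \<Union>x\<in>leaf_classes k c a. blowup_class K s x)"
    and inj: "inj_on \<phi> {0..k+l}"
    unfolding centred_copies_def by simp_all
  have leaf_class: "\<phi> a \<in> blowup_vertices s \<and> \<phi> a mod K \<in> leaf_classes k c a" if a: "a \<le> k + l" for a
  proof -
    obtain x where x: "x \<in> leaf_classes k c a" "\<phi> a \<in> blowup_class K s x"
      using PiE_mem[OF \<phi>, of a] a by auto
    moreover have "x < K" using x(1) leaf_classes_subset[OF assms] by blast
    ultimately have "\<phi> a \<in> blowup_vertices s" unfolding blowup_vertices_def by blast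
    moreover have "\<phi> a mod K = x" using mod_blowup_class[OF \<open>x < K\<close> x(2)] .
    ultimately show ?thesis using x(1) by simp
  qed
  have arcs: "(\<phi> a, \<phi> b) \<in> blowup_arcs s \<longleftrightarrow> star_arc k l a b" if "a \<le> k + l" "b \<le> k + l" for a b
    using leaf_class[OF that(1)] leaf_class[OF that(2)] arc_iff_star_arc[OF assms that]
    unfolding blowup_arcs_def by simp
  have "\<phi> \<in> {0..k+l} \<rightarrow>\<^sub>E blowup_vertices s"
    using \<phi> leaf_class by (simp add: PiE_iff)
  then show "\<phi> \<in> star_copies k l (blowup_vertices s) (blowup_arcs s)"
    unfolding star_copies_def using inj arcs by simp
qed

lemma card_centred_copies_ge:
  assumes "c < K"
  shows "(s c - (k+l+1)) * ((\<Sum>x\<in>Out c. s x) - (k+l+1)) ^ k * ((\<Sum>x\<in>In c. s x) - (k+l+1)) ^ l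
    \<le> card (centred_copies k l s c)"
proof -
  define M where "M = k + l + 1"
  define slot_size where "slot_size a = card (\<Union>x\<in>leaf_classes k c a. blowup_class K s x) - M" for a
  have slot_size: "slot_size a = (\<Sum>x\<in>leaf_classes k c a. s x) - M" for a
    unfolding slot_size_def using card_UN_blowup_class leaf_classes_subset[OF assms] by simp
  have "(\<Prod>a<M. slot_size a) = slot_size 0 * (\<Prod>a<k+l. slot_size (Suc a))"
    unfolding M_def Suc_eq_plus1[symmetric] by (rule prod.lessThan_Suc_shift)
  also have "\<dots> = (s c - M) * (\<Prod>a<k+l. if a < k then (\<Sum>x\<in>Out c. s x) - M else (\<Sum>x\<in>In c. s x) - M)"
    by (intro arg_cong2[where f = "(*)"] prod.cong) (auto simp: slot_size leaf_classes_def)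
  also have "\<dots> = (s c - M) * ((\<Sum>x\<in>Out c. s x) - M) ^ k * ((\<Sum>x\<in>In c. s x) - M) ^ l"
    by (simp only: prod_lessThan_add_if mult.assoc)
  finally have prod_eq: "(\<Prod>a<M. slot_size a)
      = (s c - M) * ((\<Sum>x\<in>Out c. s x) - M) ^ k * ((\<Sum>x\<in>In c. s x) - M) ^ l" .
  have "(\<Prod>a<M. slot_size a) \<le> card (centred_copies k l s c)"
    unfolding slot_size_def centred_copies_def M_def
    by (rule card_inj_PiE_lessThan_ge) (simp add: finite_blowup_class finite_leaf_classes[OF assms])
  then show ?thesis unfolding prod_eq unfolding M_def .
qed

lemma sum_card_centred_copies_le:
  "(\<Sum>c<K. card (centred_copies k l s c)) \<le> card (star_copies k l (blowup_vertices s) (blowup_arcs s))"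
proof -
  have centre: "\<phi> 0 \<in> blowup_class K s c" if "\<phi> \<in> centred_copies k l s c" for \<phi> c
  proof -
    have "\<phi> 0 \<in> (\<Union>x\<in>leaf_classes k c 0. blowup_class K s x)"
      using that PiE_mem[of \<phi> "{..<k+l+1}" _ 0] unfolding centred_copies_def by auto
    then show ?thesis by (simp add: leaf_classes_def)
  qed
  have "(\<Sum>c<K. card (centred_copies k l s c)) = card (\<Union>c<K. centred_copies k l s c)"
  proof (rule card_UN_disjoint[symmetric])
    show "\<forall>c\<in>{..<K}. finite (centred_copies k l s c)"
      using finite_subset[OF centred_copies_subset finite_star_copies[OF finite_blowup_vertices]]
      by blast
    have "centred_copies k l s c \<inter> centred_copies k l s c' = {}"
      if "c < K" "c' < K" "c \<noteq> c'" for c c'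
    proof (rule equals0I)
      fix \<phi> assume "\<phi> \<in> centred_copies k l s c \<inter> centred_copies k l s c'"
      then have "\<phi> 0 \<in> blowup_class K s c" and "\<phi> 0 \<in> blowup_class K s c'"
        by (blast intro: centre)+
      then show False
        using mod_blowup_class[OF that(1)] mod_blowup_class[OF that(2)] that(3) by metis
    qed
    then show "\<forall>c\<in>{..<K}. \<forall>c'\<in>{..<K}. c \<noteq> c' \<longrightarrow> centred_copies k l s c \<inter> centred_copies k l s c' = {}"
      by blast
  qed simp
  also have "\<dots> \<le> card (star_copies k l (blowup_vertices s) (blowup_arcs s))"
    by (rule card_mono[OF finite_star_copies[OF finite_blowup_vertices]])
      (use centred_copies_subset in blast)
  finally show ?thesis .
qed

lemma s_density_blowup_ge:
  "(\<Sum>c<K. real (s c - (k+l+1)) * real ((\<Sum>x\<in>Out c. s x) - (k+l+1)) ^ k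
      * real ((\<Sum>x\<in>In c. s x) - (k+l+1)) ^ l) / real (\<Sum>c<K. s c) ^ (k+l+1)
    \<le> s_density k l (blowup_vertices s) (blowup_arcs s)"
proof -
  have "(\<Sum>c<K. real (s c - (k+l+1)) * real ((\<Sum>x\<in>Out c. s x) - (k+l+1)) ^ k
      * real ((\<Sum>x\<in>In c. s x) - (k+l+1)) ^ l)
    = real (\<Sum>c<K. (s c - (k+l+1)) * ((\<Sum>x\<in>Out c. s x) - (k+l+1)) ^ k
      * ((\<Sum>x\<in>In c. s x) - (k+l+1)) ^ l)"
    by simp
  also have "\<dots> \<le> real (\<Sum>c<K. card (centred_copies k l s c))"
    using card_centred_copies_ge by (intro of_nat_mono sum_mono) auto
  also have "\<dots> \<le> real (card (star_copies k l (blowup_vertices s) (blowup_arcs s)))"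
    using sum_card_centred_copies_le by (rule of_nat_mono)
  finally show ?thesis
    unfolding s_density_def card_blowup_vertices by (rule divide_right_mono) (simp add: sum_nonneg)
qed

definition pattern_density :: "nat \<Rightarrow> nat \<Rightarrow> (nat \<Rightarrow> real) \<Rightarrow> real" where
  "pattern_density k l w = (\<Sum>c<K. w c * (\<Sum>x\<in>Out c. w x) ^ k * (\<Sum>x\<in>In c. w x) ^ l)"

lemma blowup_count_tendsto:
  fixes k l :: nat and w :: "nat \<Rightarrow> real"
  assumes nonneg: "\<And>c. c < K \<Longrightarrow> w c \<ge> 0" and total: "(\<Sum>c<K. w c) = 1"
  defines "s \<equiv> blowup_size w" and "M \<equiv> k + l + 1"
  shows "(\<lambda>n. (\<Sum>c<K. real (s n c - M) * real ((\<Sum>x\<in>Out c. s n x) - M) ^ k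
      * real ((\<Sum>x\<in>In c. s n x) - M) ^ l) / real (\<Sum>c<K. s n c) ^ M)
    \<longlonglongrightarrow> pattern_density k l w"
proof -
  have sum_nonneg: "(\<Sum>x\<in>X. w x) \<ge> 0" if "X \<subseteq> {..<K}" for X
    using that nonneg by (intro sum_nonneg) auto
  have lim_sum: "(\<lambda>n. real ((\<Sum>x\<in>X. s n x) - M) / real n) \<longlonglongrightarrow> (\<Sum>x\<in>X. w x)"
    if "X \<subseteq> {..<K}" for X
    unfolding s_def using that nonneg sum_nonneg[OF that]
    by (intro tendsto_nat_diff_over_n tendsto_sum_blowup_size) auto
  have "(\<lambda>n. (\<Sum>c<K. (real (s n c - M) / real n) * (real ((\<Sum>x\<in>Out c. s n x) - M) / real n) ^ k
      * (real ((\<Sum>x\<in>In c. s n x) - M) / real n) ^ l) / (real (\<Sum>c<K. s n c) / real n) ^ M)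
    \<longlonglongrightarrow> pattern_density k l w / 1 ^ M"
    unfolding pattern_density_def
  proof (intro tendsto_divide tendsto_sum tendsto_mult tendsto_power)
    fix c assume "c \<in> {..<K}"
    then show "(\<lambda>n. real (s n c - M) / real n) \<longlonglongrightarrow> w c"
      and "(\<lambda>n. real ((\<Sum>x\<in>Out c. s n x) - M) / real n) \<longlonglongrightarrow> (\<Sum>x\<in>Out c. w x)"
      and "(\<lambda>n. real ((\<Sum>x\<in>In c. s n x) - M) / real n) \<longlonglongrightarrow> (\<Sum>x\<in>In c. w x)"
      using lim_sum[of "{c}"] lim_sum Out_subset In_subset by auto
  next
    show "(\<lambda>n. real (\<Sum>c<K. s n c) / real n) \<longlonglongrightarrow> 1"
      using tendsto_sum_blowup_size[of "{..<K}" w] nonneg total unfolding s_def by simp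
  qed simp
  moreover have "eventually (\<lambda>n.
      (\<Sum>c<K. (real (s n c - M) / real n) * (real ((\<Sum>x\<in>Out c. s n x) - M) / real n) ^ k
        * (real ((\<Sum>x\<in>In c. s n x) - M) / real n) ^ l) / (real (\<Sum>c<K. s n c) / real n) ^ M
      = (\<Sum>c<K. real (s n c - M) * real ((\<Sum>x\<in>Out c. s n x) - M) ^ k
        * real ((\<Sum>x\<in>In c. s n x) - M) ^ l) / real (\<Sum>c<K. s n c) ^ M) sequentially"
    using eventually_gt_at_top[of 0]
    by eventually_elim (unfold M_def, rule star_count_ratio_scale, simp)
  ultimately show ?thesis by (simp add: Lim_transform_eventually)
qed

lemma pattern_density_le_sup:
  assumes "\<And>c. c < K \<Longrightarrow> w c \<ge> 0" and "(\<Sum>c<K. w c) = 1"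
  shows "pattern_density k l w \<le> sup_s_density k l"
proof (rule LIMSEQ_le_const2[OF blowup_count_tendsto[OF assms]])
  have "K > 0" using assms(2) by (cases K) auto
  then have "digraph (blowup_vertices (blowup_size w n)) (blowup_arcs (blowup_size w n))" for n
    by (rule digraph_blowup) (simp add: blowup_size_def)
  then show "\<exists>N. \<forall>n\<ge>N. (\<Sum>c<K. real (blowup_size w n c - (k + l + 1))
      * real ((\<Sum>x\<in>Out c. blowup_size w n x) - (k + l + 1)) ^ k
      * real ((\<Sum>x\<in>In c. blowup_size w n x) - (k + l + 1)) ^ l)
      / real (\<Sum>c<K. blowup_size w n c) ^ (k + l + 1) \<le> sup_s_density k l"
    using s_density_blowup_ge s_density_le_sup order_trans by blast
qed

end

lemma cycle4_density_le_sup: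
  fixes \<alpha> :: real
  assumes "0 \<le> \<alpha>" "\<alpha> \<le> 1"
  shows "1 / 2 ^ (2 * k) * (\<alpha> * (1 - \<alpha>) ^ (2 * k) + (1 - \<alpha>) * \<alpha> ^ (2 * k)) \<le> sup_s_density k k"
proof -
  define H where "H a b \<longleftrightarrow> (a, b) \<in> {(0::nat, 2::nat), (2, 1), (1, 3), (3, 0)}" for a b
  define Out where "Out c = (if c = 0 then {2} else if c = 1 then {3} else if c = 2 then {1} else {0::nat})"
    for c :: nat
  define In where "In c = (if c = 0 then {3} else if c = 1 then {2} else if c = 2 then {0} else {1::nat})"
    for c :: nat
  define w where "w c = (if c < 2 then \<alpha> / 2 else (1 - \<alpha>) / 2)" for c :: nat
  have cases4: "c < 4 \<Longrightarrow> c = 0 \<or> c = 1 \<or> c = 2 \<or> c = 3" for c :: nat by auto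
  interpret star_pattern 4 H Out In
    by unfold_locales (auto simp: H_def Out_def In_def dest!: cases4)
  have "pattern_density k k w \<le> sup_s_density k k"
    using assms by (intro pattern_density_le_sup) (auto simp: w_def eval_nat_numeral)
  moreover have "pattern_density k k w
      = 1 / 2 ^ (2 * k) * (\<alpha> * (1 - \<alpha>) ^ (2 * k) + (1 - \<alpha>) * \<alpha> ^ (2 * k))"
  proof -
    have sq: "(y / 2) ^ k * (y / 2) ^ k = y ^ (2 * k) / 2 ^ (2 * k)" for y :: real
      by (simp add: power_divide mult_2 power_add)
    have "pattern_density k k w
      = 2 * (\<alpha> / 2 * (((1 - \<alpha>) / 2) ^ k * ((1 - \<alpha>) / 2) ^ k))
        + 2 * ((1 - \<alpha>) / 2 * ((\<alpha> / 2) ^ k * (\<alpha> / 2) ^ k))"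
      unfolding pattern_density_def by (simp add: eval_nat_numeral w_def Out_def In_def)
    then show ?thesis unfolding sq by (simp add: field_simps)
  qed
  ultimately show ?thesis by simp
qed

lemma add_mod_inj:
  fixes i j j' N :: nat
  assumes "j < N" "j' < N" "(i + j) mod N = (i + j') mod N"
  shows "j = j'"
proof (cases "j \<le> j'")
  case True
  from mod_eq_nat2E[OF assms(3)] True obtain q where "i + j' = i + j + N * q" by auto
  then show ?thesis using assms(2) by (cases q) auto
next
  case False
  from mod_eq_nat2E[OF assms(3)[symmetric]] False obtain q where "i + j = i + j' + N * q" by auto
  then show ?thesis using assms(1) by (cases q) auto
qed

lemma card_add_mod_less:
  fixes i N r :: nat
  assumes "r \<le> N"
  shows "card {j \<in> {..<N}. (i + j) mod N < r} = r"
proof (cases "N = 0")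
  case True
  then show ?thesis using assms by simp
next
  case False
  define p where "p j = (i + j) mod N" for j
  have inj: "inj_on p {..<N}" unfolding p_def by (rule inj_onI) (auto intro: add_mod_inj)
  have "p ` {..<N} \<subseteq> {..<N}" unfolding p_def using False by auto
  then have onto: "p ` {..<N} = {..<N}"
    using card_subset_eq[of "{..<N}" "p ` {..<N}"] card_image[OF inj] by simp
  have "p ` {j \<in> {..<N}. p j < r} = {..<r}"
  proof
    show "{..<r} \<subseteq> p ` {j \<in> {..<N}. p j < r}"
    proof
      fix y assume "y \<in> {..<r}"
      then obtain j where "j < N" "y = p j" using onto assms by (metis imageE lessThan_iff order_less_le_trans)
      then show "y \<in> p ` {j \<in> {..<N}. p j < r}" using \<open>y \<in> {..<r}\<close> by auto
    qed
  qed auto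
  moreover have "inj_on p {j \<in> {..<N}. p j < r}" using inj by (rule inj_on_subset) auto
  ultimately show ?thesis unfolding p_def[symmetric] by (metis card_image card_lessThan)
qed

lemma card_add_mod_not_less:
  fixes i N r :: nat
  assumes "r \<le> N"
  shows "card {j \<in> {..<N}. \<not> (i + j) mod N < r} = N - r"
proof -
  have sub: "{j \<in> {..<N}. (i + j) mod N < r} \<subseteq> {..<N}" by auto
  have "{j \<in> {..<N}. \<not> (i + j) mod N < r} = {..<N} - {j \<in> {..<N}. (i + j) mod N < r}" by auto
  also have "card \<dots> = N - r"
    using card_Diff_subset[OF finite_subset[OF sub] sub] card_add_mod_less[OF assms] by simp
  finally show ?thesis .
qed

text \<open>Classes 0..N-1 form side A, classes N..2N-1 side B, and 2N is a sink receiving an arc from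
  every class of A. Class N + j of B sends arcs to the r classes a of A with (a + j) mod N < r and
  receives arcs from the other N - r, so all leaves of a centre lie on one side, which spans no arc.\<close>

definition circ_arc :: "nat \<Rightarrow> nat \<Rightarrow> nat \<Rightarrow> nat \<Rightarrow> bool" where
  "circ_arc N r a b \<longleftrightarrow> (a < N \<and> b = N + N)
     \<or> (N \<le> a \<and> a < N + N \<and> b < N \<and> (b + (a - N)) mod N < r)
     \<or> (a < N \<and> N \<le> b \<and> b < N + N \<and> \<not> (a + (b - N)) mod N < r)"

definition circ_Out :: "nat \<Rightarrow> nat \<Rightarrow> nat \<Rightarrow> nat set" where
  "circ_Out N r c = (if c < N then insert (N + N) ((\<lambda>j. N + j) ` {j \<in> {..<N}. \<not> (c + j) mod N < r})
      else if c < N + N then {i \<in> {..<N}. (i + (c - N)) mod N < r} else {})"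

definition circ_In :: "nat \<Rightarrow> nat \<Rightarrow> nat \<Rightarrow> nat set" where
  "circ_In N r c = (if c < N then (\<lambda>j. N + j) ` {j \<in> {..<N}. (c + j) mod N < r}
      else if c < N + N then {i \<in> {..<N}. \<not> (i + (c - N)) mod N < r} else {})"

lemma star_pattern_circ: "star_pattern (Suc (N + N)) (circ_arc N r) (circ_Out N r) (circ_In N r)"
  by unfold_locales
    (auto simp: circ_arc_def circ_Out_def circ_In_def split: if_splits)

lemma circ_star_sum:
  fixes a b t :: real
  assumes "r \<le> N" and "k \<ge> 1"
  defines "w \<equiv> \<lambda>c. if c < N then a else if c < N + N then b else t"
  shows "(\<Sum>c<Suc (N + N). w c * (\<Sum>x\<in>circ_Out N r c. w x) ^ k * (\<Sum>x\<in>circ_In N r c. w x) ^ l)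
    = real N * a * (t + real (N - r) * b) ^ k * (real r * b) ^ l
      + real N * b * (real r * a) ^ k * (real (N - r) * a) ^ l"
proof -
  have inj_shift: "inj_on (\<lambda>j. N + j) X" for X by (auto simp: inj_on_def)
  have centre_A: "w c * (\<Sum>x\<in>circ_Out N r c. w x) ^ k * (\<Sum>x\<in>circ_In N r c. w x) ^ l
      = a * (t + real (N - r) * b) ^ k * (real r * b) ^ l" if "c < N" for c
  proof -
    have "(\<Sum>x\<in>circ_Out N r c. w x)
        = w (N + N) + (\<Sum>x\<in>(\<lambda>j. N + j) ` {j \<in> {..<N}. \<not> (c + j) mod N < r}. w x)"
      using that by (simp add: circ_Out_def) (subst sum.insert, auto)
    also have "\<dots> = t + (\<Sum>j\<in>{j \<in> {..<N}. \<not> (c + j) mod N < r}. w (N + j))"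
      by (simp add: sum.reindex[OF inj_shift] w_def)
    also have "\<dots> = t + real (N - r) * b"
      using card_add_mod_not_less[OF assms(1), of c] by (simp add: w_def)
    finally have "(\<Sum>x\<in>circ_Out N r c. w x) = t + real (N - r) * b" .
    moreover have "(\<Sum>x\<in>circ_In N r c. w x) = real r * b"
      using that card_add_mod_less[OF assms(1), of c]
      by (simp add: circ_In_def sum.reindex[OF inj_shift] w_def)
    ultimately show ?thesis using that by (simp add: w_def)
  qed
  have centre_B: "w (N + j) * (\<Sum>x\<in>circ_Out N r (N + j). w x) ^ k * (\<Sum>x\<in>circ_In N r (N + j). w x) ^ l
      = b * (real r * a) ^ k * (real (N - r) * a) ^ l" if "j < N" for j
  proof -
    have "(\<Sum>x\<in>circ_Out N r (N + j). w x) = (\<Sum>i\<in>{i \<in> {..<N}. (j + i) mod N < r}. a)"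
      using that by (intro sum.cong) (auto simp: circ_Out_def w_def add.commute)
    moreover have "(\<Sum>x\<in>circ_In N r (N + j). w x) = (\<Sum>i\<in>{i \<in> {..<N}. \<not> (j + i) mod N < r}. a)"
      using that by (intro sum.cong) (auto simp: circ_In_def w_def add.commute)
    ultimately show ?thesis
      using that card_add_mod_less[OF assms(1), of j] card_add_mod_not_less[OF assms(1), of j]
      by (simp add: w_def)
  qed
  have "(\<Sum>x\<in>circ_Out N r (N + N). w x) = 0" by (simp add: circ_Out_def)
  then have "(\<Sum>c<Suc (N + N). w c * (\<Sum>x\<in>circ_Out N r c. w x) ^ k * (\<Sum>x\<in>circ_In N r c. w x) ^ l)
      = (\<Sum>c<N. w c * (\<Sum>x\<in>circ_Out N r c. w x) ^ k * (\<Sum>x\<in>circ_In N r c. w x) ^ l)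
      + (\<Sum>j<N. w (N + j) * (\<Sum>x\<in>circ_Out N r (N + j). w x) ^ k * (\<Sum>x\<in>circ_In N r (N + j). w x) ^ l)"
    using assms(2) by (simp add: sum_lessThan_add)
  also have "\<dots> = real N * (a * (t + real (N - r) * b) ^ k * (real r * b) ^ l)
      + real N * (b * (real r * a) ^ k * (real (N - r) * a) ^ l)"
    using centre_A centre_B by simp
  finally show ?thesis by (simp add: mult.assoc)
qed

definition opt_objective :: "nat \<Rightarrow> nat \<Rightarrow> real \<Rightarrow> real \<Rightarrow> real \<Rightarrow> real" where
  "opt_objective k l C \<alpha> d = \<alpha> * (1 - \<alpha>) ^ (k + l) * d ^ k * (1 - d) ^ l + C * (1 - \<alpha>) * \<alpha> ^ (k + l) * (1 - d)"

lemma circ_density_eq_opt_objective: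
  fixes \<alpha> \<beta> d x :: real
  assumes N: "0 < N" and k: "1 \<le> k"
    and x: "x = real r / real N" "1 - x = real l / real N" and \<beta>x: "\<beta> * x = 1 - d"
  shows "real N * (\<alpha> / N) * ((1 - \<alpha>) * (1 - \<beta>) + real l * ((1 - \<alpha>) * \<beta> / N)) ^ k
          * (real r * ((1 - \<alpha>) * \<beta> / N)) ^ l
        + real N * ((1 - \<alpha>) * \<beta> / N) * (real r * (\<alpha> / N)) ^ k * (real l * (\<alpha> / N)) ^ l
      = opt_objective k l (x ^ (k - 1) * (1 - x) ^ l) \<alpha> d"
proof -
  have "real l * ((1 - \<alpha>) * \<beta> / N) = (1 - \<alpha>) * \<beta> * (1 - x)" using x(2) by simp
  then have "(1 - \<alpha>) * (1 - \<beta>) + real l * ((1 - \<alpha>) * \<beta> / N) = (1 - \<alpha>) * (1 - \<beta> * x)"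
    by (simp add: algebra_simps)
  also have "\<dots> = (1 - \<alpha>) * d" using \<beta>x by simp
  finally have out_A: "(1 - \<alpha>) * (1 - \<beta>) + real l * ((1 - \<alpha>) * \<beta> / N) = (1 - \<alpha>) * d" .
  have in_A: "real r * ((1 - \<alpha>) * \<beta> / N) = (1 - \<alpha>) * (1 - d)"
    unfolding \<beta>x[symmetric] x(1) by simp
  have out_B: "real r * (\<alpha> / N) = \<alpha> * x" and in_B: "real l * (\<alpha> / N) = \<alpha> * (1 - x)"
    using x by simp_all
  have weights: "real N * (\<alpha> / N) = \<alpha>" "real N * ((1 - \<alpha>) * \<beta> / N) = (1 - \<alpha>) * \<beta>"
    using N by simp_all
  have "x ^ k = x * x ^ (k - 1)" using k by (cases k) auto
  then have "(1 - \<alpha>) * \<beta> * (\<alpha> * x) ^ k * (\<alpha> * (1 - x)) ^ l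
      = x ^ (k - 1) * (1 - x) ^ l * (1 - \<alpha>) * \<alpha> ^ (k + l) * (\<beta> * x)"
    by (simp add: power_mult_distrib power_add ac_simps)
  then show ?thesis
    unfolding out_A in_A out_B in_B weights opt_objective_def \<beta>x
    by (simp add: power_mult_distrib power_add ac_simps)
qed

lemma circ_objective_le_sup:
  fixes k l :: nat and \<alpha> d :: real
  defines "x \<equiv> real (k - 1) / real (k + l - 1)"
  assumes kl: "l < k" "1 \<le> l" and \<alpha>: "0 \<le> \<alpha>" "\<alpha> \<le> 1" and d: "1 - x \<le> d" "d \<le> 1"
  shows "opt_objective k l (x ^ (k - 1) * (1 - x) ^ l) \<alpha> d \<le> sup_s_density k l"
proof -
  define N where "N = k + l - 1"
  define r where "r = k - 1"
  \<comment> \<open>A carries weight \<alpha>, B weight (1 - \<alpha>) \<beta> and the sink the rest; \<beta> is chosen so that an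
    A-centre has in-leaf weight (1 - \<alpha>) (1 - d) and out-leaf weight (1 - \<alpha>) d.\<close>
  define \<beta> where "\<beta> = (1 - d) / x"
  have N: "N > 0" "r \<le> N" "N - r = l" and r: "r > 0" using kl unfolding N_def r_def by auto
  have x: "x = real r / real N" "x > 0" "1 - x = real l / real N"
    using N r unfolding x_def N_def r_def by (auto simp: field_simps of_nat_diff[symmetric])
  have \<beta>x: "\<beta> * x = 1 - d" unfolding \<beta>_def using x(2) by simp
  have \<beta>: "0 \<le> \<beta>" "\<beta> \<le> 1" unfolding \<beta>_def using x(2) d by (auto simp: field_simps)
  define w where "w = (\<lambda>c. if c < N then \<alpha> / N else if c < N + N then (1 - \<alpha>) * \<beta> / N
      else (1 - \<alpha>) * (1 - \<beta>))"
  interpret star_pattern "Suc (N + N)" "circ_arc N r" "circ_Out N r" "circ_In N r"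
    by (rule star_pattern_circ)
  have "pattern_density k l w \<le> sup_s_density k l"
  proof (rule pattern_density_le_sup)
    show "0 \<le> w c" for c using \<alpha> \<beta> by (simp add: w_def)
    have "(\<Sum>c<Suc (N + N). w c) = real N * (\<alpha> / N) + real N * ((1 - \<alpha>) * \<beta> / N) + (1 - \<alpha>) * (1 - \<beta>)"
      by (simp add: sum_lessThan_add w_def)
    then show "(\<Sum>c<Suc (N + N). w c) = 1" using N by (simp add: field_simps)
  qed
  moreover have "pattern_density k l w
      = real N * (\<alpha> / N) * ((1 - \<alpha>) * (1 - \<beta>) + real l * ((1 - \<alpha>) * \<beta> / N)) ^ k
          * (real r * ((1 - \<alpha>) * \<beta> / N)) ^ l
        + real N * ((1 - \<alpha>) * \<beta> / N) * (real r * (\<alpha> / N)) ^ k * (real l * (\<alpha> / N)) ^ l"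
    unfolding pattern_density_def w_def N(3)[symmetric] using N(2) kl by (intro circ_star_sum) auto
  moreover have "\<dots> = opt_objective k l (x ^ (k - 1) * (1 - x) ^ l) \<alpha> d"
    using N(1) kl x(1,3) \<beta>x by (intro circ_density_eq_opt_objective) auto
  ultimately show ?thesis by simp
qed

lemma power_mult_one_minus_power_le:
  fixes a b :: nat and y :: real
  assumes ab: "a > 0" "b > 0" and y: "0 \<le> y" "y \<le> 1"
  shows "y ^ a * (1 - y) ^ b \<le> (real a / real (a + b)) ^ a * (real b / real (a + b)) ^ b"
proof -
  define n where "n = real (a + b)"
  define p where "p = real a / n"
  define q where "q = real b / n"
  have n0: "n > 0" and p0: "p > 0" and q0: "q > 0" using ab unfolding n_def p_def q_def by auto
  define z where "z i = (if i < a then y / p else (1 - y) / q)" for i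
  have "(\<Prod>i<a+b. z i) powr (1 / card {..<a+b}) \<le> (\<Sum>i<a+b. z i / card {..<a+b})"
    by (rule arith_geom_mean) (use ab y p0 q0 in \<open>auto simp: z_def\<close>)
  moreover have "(\<Sum>i<a+b. z i / card {..<a+b}) = 1"
  proof -
    have "(\<Sum>i<a+b. z i / card {..<a+b}) = (\<Sum>i<a+b. z i) / n"
      by (simp add: sum_divide_distrib n_def)
    also have "(\<Sum>i<a+b. z i) = real a * (y / p) + real b * ((1 - y) / q)"
      unfolding z_def by (rule sum_lessThan_add_if)
    also have "\<dots> = n" using ab n0 unfolding p_def q_def by (simp add: field_simps)
    finally show ?thesis using n0 by simp
  qed
  moreover have "(\<Prod>i<a+b. z i) = (y / p) ^ a * ((1 - y) / q) ^ b"
    unfolding z_def by (rule prod_lessThan_add_if)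
  ultimately have le: "((y / p) ^ a * ((1 - y) / q) ^ b) powr (1 / real (a + b)) \<le> 1" by simp
  have "(y / p) ^ a * ((1 - y) / q) ^ b \<le> 1"
  proof (rule ccontr)
    assume "\<not> ?thesis"
    then have "1 < ((y / p) ^ a * ((1 - y) / q) ^ b) powr (1 / real (a + b))"
      using ab by (intro gr_one_powr) auto
    then show False using le by simp
  qed
  then have "y ^ a * (1 - y) ^ b \<le> p ^ a * q ^ b"
    using p0 q0 by (simp add: power_divide field_simps)
  then show ?thesis unfolding p_def q_def n_def .
qed

lemma opt_objective_le_at:
  fixes \<alpha> d x C :: real
  assumes \<alpha>: "0 \<le> \<alpha>" "\<alpha> \<le> 1 / 2" and d: "0 \<le> d" "d \<le> x" and k: "k \<ge> 1"
    and C: "d ^ (k - 1) * (1 - d) ^ l \<le> C" "C \<ge> 0" and x: "x ^ k * (1 - x) ^ l = x * C"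
  shows "opt_objective k l C \<alpha> d \<le> opt_objective k l C \<alpha> x"
proof -
  define P where "P = \<alpha> * (1 - \<alpha>) ^ (k + l)"
  define Q where "Q = (1 - \<alpha>) * \<alpha> ^ (k + l)"
  have "Q \<le> P"
  proof -
    have "\<alpha> ^ (k + l - 1) \<le> (1 - \<alpha>) ^ (k + l - 1)" using \<alpha> by (intro power_mono) auto
    then have "(\<alpha> * (1 - \<alpha>)) * \<alpha> ^ (k + l - 1) \<le> (\<alpha> * (1 - \<alpha>)) * (1 - \<alpha>) ^ (k + l - 1)"
      using \<alpha> by (intro mult_left_mono) auto
    moreover have "\<alpha> ^ (k + l) = \<alpha> * \<alpha> ^ (k + l - 1)" "(1 - \<alpha>) ^ (k + l) = (1 - \<alpha>) * (1 - \<alpha>) ^ (k + l - 1)"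
      using k by (metis Suc_diff_1 add_gr_0 less_le_trans zero_less_one power_Suc)+
    ultimately show ?thesis unfolding P_def Q_def by (simp add: ac_simps)
  qed
  have "d ^ k * (1 - d) ^ l \<le> d * C"
  proof -
    have "d ^ k = d * d ^ (k - 1)" using k by (cases k) auto
    then show ?thesis using C d by (simp add: mult.assoc mult_left_mono)
  qed
  then have "P * (d ^ k * (1 - d) ^ l) + C * Q * (1 - d) \<le> P * (d * C) + C * Q * (1 - d)"
    unfolding P_def using \<alpha> by (simp add: mult_left_mono)
  also have "\<dots> = C * Q + C * d * (P - Q)" by (simp add: algebra_simps)
  also have "\<dots> \<le> C * Q + C * x * (P - Q)"
    using \<open>Q \<le> P\<close> C d by (intro add_left_mono mult_right_mono mult_left_mono) auto
  also have "\<dots> = P * (x * C) + C * Q * (1 - x)" by (simp add: algebra_simps)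
  finally show ?thesis unfolding P_def Q_def x[symmetric] opt_objective_def by (simp add: ac_simps)
qed

lemma OPT_diagonal_le_sup: "OPT k k \<le> sup_s_density k k"
proof -
  have "(SUP \<alpha>\<in>{0..1::real}. \<alpha> * (1 - \<alpha>) ^ (2 * k) + (1 - \<alpha>) * \<alpha> ^ (2 * k))
      \<le> 2 ^ (2 * k) * sup_s_density k k"
  proof (rule cSUP_least)
    fix \<alpha> :: real assume "\<alpha> \<in> {0..1}"
    then show "\<alpha> * (1 - \<alpha>) ^ (2 * k) + (1 - \<alpha>) * \<alpha> ^ (2 * k) \<le> 2 ^ (2 * k) * sup_s_density k k"
      using cycle4_density_le_sup[of \<alpha> k] by (simp add: field_simps)
  qed simp
  then show ?thesis unfolding OPT_def by (simp add: field_simps)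
qed

lemma opt_objective_le_sup:
  fixes k l :: nat and \<alpha> d :: real
  defines "x \<equiv> real (k - 1) / real (k + l - 1)"
  assumes kl: "l < k" "1 \<le> l" and \<alpha>: "0 \<le> \<alpha>" "\<alpha> \<le> 1 / 2" and d: "0 \<le> d" "d \<le> 1"
  shows "opt_objective k l (x ^ (k - 1) * (1 - x) ^ l) \<alpha> d \<le> sup_s_density k l"
proof -
  define C where "C = x ^ (k - 1) * (1 - x) ^ l"
  have x1: "1 - x = real l / real (k + l - 1)"
    using kl unfolding x_def by (auto simp: field_simps of_nat_diff)
  have "0 \<le> 1 - x" unfolding x1 by simp
  then have x_le_1: "x \<le> 1" by simp
  have half: "1 - x \<le> x"
    unfolding x1 unfolding x_def using kl by (intro divide_right_mono) auto
  have at_least_x: "opt_objective k l C \<alpha> d' \<le> sup_s_density k l" if "x \<le> d'" "d' \<le> 1" for d'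
    using circ_objective_le_sup[of l k \<alpha> d', folded x_def] that kl \<alpha> half unfolding C_def by simp
  show ?thesis
  proof (cases "x \<le> d")
    case True
    then show ?thesis using at_least_x d unfolding C_def by simp
  next
    case False
    have "C = (real (k - 1) / real ((k - 1) + l)) ^ (k - 1) * (real l / real ((k - 1) + l)) ^ l"
      using kl unfolding C_def x1 unfolding x_def by (simp add: Suc_leI)
    then have "d ^ (k - 1) * (1 - d) ^ l \<le> C"
      using power_mult_one_minus_power_le[of "k - 1" l d] d kl by auto
    moreover have "x ^ k * (1 - x) ^ l = x * C" unfolding C_def using kl by (cases k) auto
    ultimately have "opt_objective k l C \<alpha> d \<le> opt_objective k l C \<alpha> x"
      using \<alpha> d False kl by (intro opt_objective_le_at) (auto simp: C_def x_def)
    also have "\<dots> \<le> sup_s_density k l" using at_least_x[OF order_refl x_le_1] .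
    finally show ?thesis unfolding C_def .
  qed
qed

lemma OPT_off_diagonal_le_sup:
  assumes kl: "l < k" "1 \<le> l"
  shows "OPT k l \<le> sup_s_density k l"
proof -
  define x where "x = real (k - 1) / real (k + l - 1)"
  have C_eq: "real (k - 1) ^ (k - 1) * real l ^ l / real (k + l - 1) ^ (k + l - 1)
      = x ^ (k - 1) * (1 - x) ^ l"
  proof -
    have "1 - x = real l / real (k + l - 1)"
      using kl unfolding x_def by (auto simp: field_simps of_nat_diff)
    moreover have "k + l - 1 = (k - 1) + l" using kl by simp
    ultimately show ?thesis unfolding x_def by (simp add: power_divide power_add)
  qed
  have "real k / real (k + l) \<le> 1" using kl by (simp add: divide_le_eq_1)
  then have "(SUP p \<in> {0..1/2::real} \<times> {0..real k / real (k + l)}. case p of (\<alpha>, d) \<Rightarrow>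
      opt_objective k l (x ^ (k - 1) * (1 - x) ^ l) \<alpha> d) \<le> sup_s_density k l"
    using opt_objective_le_sup[OF kl] unfolding x_def by (intro cSUP_least) auto
  then show ?thesis using kl unfolding OPT_def opt_objective_def C_eq by simp
qed

theorem lemma3p1:
  fixes k l :: nat
  assumes "k \<ge> l" and "l \<ge> 1"
  shows "(SUP G \<in> {(V, E). digraph V E}. s_density k l (fst G) (snd G)) \<ge> OPT k l"
proof (cases "k = l")
  case True
  then show ?thesis using OPT_diagonal_le_sup by simp
next
  case False
  then show ?thesis using OPT_off_diagonal_le_sup assms by simp
qed

end
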